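(* Let $U$ be a disjunctive uninorm with neutral element $e\in\,]0,1[$, let $x\in[0,1]$ with $x<e$ be such that $U(x,\cdot)$ is continuous with range $[0,1]$, and let $a_x=\lim_{n\to+\infty}x_U^{(n)}$, $d_x=\lim_{n\to+\infty}x_U^{(-n)}$. If $U(x,t)=t$ for all $t\in[0,a_x]\cup[d_x,1]$, then $U$ is an ordinal sum of semigroups defined on $]a_x,d_x[$ and on $[0,a_x]\cup[d_x,1]$; namely, both $]a_x,d_x[$ and $[0,a_x]\cup[d_x,1]$ are closed under $U$, and $U(s,t)=t$ for all $s\in\,]a_x,d_x[$ and $t\in[0,a_x]\cup[d_x,1]$.
   Context: A uninorm is a map $U:[0,1]^2\to[0,1]$ that is commutative, associative, non-decreasing in each variable, and has a neutral element $e\in[0,1]$; it is disjunctive if $U(1,0)=1$. Under the hypotheses there is a unique $y\in[0,1]$ with $U(x,y)=e$ (and $y>e$). Define $x_U^{(0)}=e$, $x_U^{(n)}=U(x,x_U^{(n-1)})$ for $n\in\mathbb{N}$, and $x_U^{(-n)}=y_U^{(n)}$ where $y_U^{(0)}=e$, $y_U^{(n)}=U(y,y_U^{(n-1)})$; the sequence $(x_U^{(n)})_{n\ge0}$ is non-increasing and $(x_U^{(-n)})_{n\ge0}$ is non-decreasing, so the limits exist. *)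

theory Defs
  imports "HOL-Analysis.Analysis"
begin

text \<open>A uninorm on the unit interval with neutral element e; only values on [0,1]^2 matter.\<close>
definition uninorm :: "(real \<Rightarrow> real \<Rightarrow> real) \<Rightarrow> real \<Rightarrow> bool" where
  "uninorm U e \<longleftrightarrow>
     e \<in> {0..1} \<and>
     (\<forall>x\<in>{0..1}. \<forall>y\<in>{0..1}. U x y \<in> {0..1}) \<and>
     (\<forall>x\<in>{0..1}. \<forall>y\<in>{0..1}. U x y = U y x) \<and>
     (\<forall>x\<in>{0..1}. \<forall>y\<in>{0..1}. \<forall>z\<in>{0..1}. U x (U y z) = U (U x y) z) \<and>
     (\<forall>x\<in>{0..1}. \<forall>y\<in>{0..1}. \<forall>z\<in>{0..1}. x \<le> y \<longrightarrow> U x z \<le> U y z) \<and>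
     (\<forall>x\<in>{0..1}. U e x = x)"

definition disjunctive_uninorm :: "(real \<Rightarrow> real \<Rightarrow> real) \<Rightarrow> real \<Rightarrow> bool" where
  "disjunctive_uninorm U e \<longleftrightarrow> uninorm U e \<and> U 1 0 = 1"

definition upartner :: "(real \<Rightarrow> real \<Rightarrow> real) \<Rightarrow> real \<Rightarrow> real \<Rightarrow> real" where
  "upartner U e x = (THE y. y \<in> {0..1} \<and> U x y = e)"

primrec upow :: "(real \<Rightarrow> real \<Rightarrow> real) \<Rightarrow> real \<Rightarrow> real \<Rightarrow> nat \<Rightarrow> real" where
  "upow U e x 0 = e"
| "upow U e x (Suc n) = U x (upow U e x n)"

text \<open>x_U^(-n) = y_U^(n) where y is the partner of x.\<close>
definition upow_neg :: "(real \<Rightarrow> real \<Rightarrow> real) \<Rightarrow> real \<Rightarrow> real \<Rightarrow> nat \<Rightarrow> real" where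
  "upow_neg U e x n = upow U e (upartner U e x) n"

end

theory Submission
  imports Defs
begin

text \<open>
  Let \<open>y\<close> be the partner of \<open>x\<close> and write \<open>x\<^sup>n\<close>, \<open>y\<^sup>n\<close> for the \<open>U\<close>-powers. They are mutually
  inverse, \<open>x\<^sup>n\<close> decreases to \<open>a\<close> and \<open>y\<^sup>n\<close> increases to \<open>d\<close>. A fixed point \<open>t\<close> of \<open>U(x,\<cdot>)\<close> is
  fixed by every \<open>x\<^sup>n\<close> and \<open>y\<^sup>n\<close>, so monotonicity excludes \<open>x\<^sup>n < t \<le> e\<close> and \<open>e < t < y\<^sup>n\<close>: the
  fixed points avoid \<open>]a,d[\<close>, and every \<open>s \<in> ]a,d[\<close>, squeezed between some \<open>x\<^sup>n\<close> and \<open>y\<^sup>m\<close>,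
  fixes them too. The fixed points of \<open>U(x,\<cdot>)\<close> are closed under \<open>U\<close>, hence so is the outer
  set. Finally the limits are never attained (\<open>x\<^sup>n = a\<close> would give \<open>e = U(y\<^sup>n, a) = a\<close>), so
  for \<open>s, t \<in> ]a,d[\<close> the value \<open>U(s,t)\<close>, squeezed between \<open>x\<^sup>n\<^sup>+\<^sup>k\<close> and \<open>y\<^sup>m\<^sup>+\<^sup>l\<close>,
  stays in \<open>]a,d[\<close>.
\<close>

locale unit_uninorm =
  fixes U :: "real \<Rightarrow> real \<Rightarrow> real" and e :: real
  assumes uninorm: "uninorm U e"
begin

lemma neutral_in_unit: "e \<in> {0..1}"
  using uninorm unfolding uninorm_def by blast

lemma closed: "s \<in> {0..1} \<Longrightarrow> t \<in> {0..1} \<Longrightarrow> U s t \<in> {0..1}"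
  using uninorm unfolding uninorm_def by blast

lemma commute: "s \<in> {0..1} \<Longrightarrow> t \<in> {0..1} \<Longrightarrow> U s t = U t s"
  using uninorm unfolding uninorm_def by blast

lemma assoc: "s \<in> {0..1} \<Longrightarrow> t \<in> {0..1} \<Longrightarrow> z \<in> {0..1} \<Longrightarrow> U s (U t z) = U (U s t) z"
  using uninorm unfolding uninorm_def by blast

lemma mono_left: "s \<in> {0..1} \<Longrightarrow> t \<in> {0..1} \<Longrightarrow> z \<in> {0..1} \<Longrightarrow> s \<le> t \<Longrightarrow> U s z \<le> U t z"
  using uninorm unfolding uninorm_def by blast

lemma mono_right:
  assumes "s \<in> {0..1}" "t \<in> {0..1}" "z \<in> {0..1}" "s \<le> t"
  shows "U z s \<le> U z t"
  using assms mono_left[of s t z] commute[of z s] commute[of z t] by simp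

lemma neutral_left: "t \<in> {0..1} \<Longrightarrow> U e t = t"
  using uninorm unfolding uninorm_def by blast

lemma neutral_right: "t \<in> {0..1} \<Longrightarrow> U t e = t"
  using neutral_left[of t] commute[of t e] neutral_in_unit by simp

lemma upartner_eqI:
  assumes "x \<in> {0..1}" "y \<in> {0..1}" "U x y = e"
  shows "upartner U e x = y"
  unfolding upartner_def
proof (rule the_equality)
  show "y \<in> {0..1} \<and> U x y = e" using assms by simp
next
  fix z assume z: "z \<in> {0..1} \<and> U x z = e"
  have "z = U (U y x) z" using assms z commute[of y x] neutral_left by simp
  also have "\<dots> = U y (U x z)" by (rule assoc[symmetric]) (use assms z in auto)
  also have "\<dots> = U y e" using z by simp
  also have "\<dots> = y" using assms neutral_right by simp
  finally show "z = y" .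
qed

lemma upow_in_unit: "z \<in> {0..1} \<Longrightarrow> upow U e z n \<in> {0..1}"
  by (induction n) (simp_all add: neutral_in_unit closed del: atLeastAtMost_iff)

lemma upow_add:
  assumes "z \<in> {0..1}"
  shows "U (upow U e z n) (upow U e z k) = upow U e z (n + k)"
proof (induction n)
  case 0
  then show ?case using assms neutral_left upow_in_unit by simp
next
  case (Suc n)
  have "U (upow U e z (Suc n)) (upow U e z k) = U z (U (upow U e z n) (upow U e z k))"
    using assms assoc upow_in_unit by simp
  then show ?case using Suc by simp
qed

lemma upow_inverse:
  assumes x: "x \<in> {0..1}" and y: "y \<in> {0..1}" and "U x y = e"
  shows "U (upow U e x n) (upow U e y n) = e"
proof (induction n)
  case 0
  then show ?case using neutral_left neutral_in_unit by simp
next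
  case (Suc n)
  let ?X = "upow U e x n" and ?Y = "upow U e y n"
  have X: "?X \<in> {0..1}" and Y: "?Y \<in> {0..1}" using x y upow_in_unit by auto
  have "U (U x ?X) (U y ?Y) = U x (U (U ?X y) ?Y)" using x y X Y closed assoc by simp
  also have "\<dots> = U x (U (U y ?X) ?Y)" using y X commute[OF X y] by simp
  also have "\<dots> = U (U x y) (U ?X ?Y)" using x y X Y closed assoc by simp
  finally show ?case using Suc assms neutral_left neutral_in_unit by simp
qed

lemma fixed_by_inverse:
  assumes "x \<in> {0..1}" "y \<in> {0..1}" "t \<in> {0..1}" "U x y = e" "U x t = t"
  shows "U y t = t"
proof -
  have "U y t = U (U y x) t" using assms assoc[of y x t] by simp
  then show ?thesis using assms commute neutral_left by simp
qed

lemma fixed_by_upow: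
  assumes z: "z \<in> {0..1}" and t: "t \<in> {0..1}" "U z t = t"
  shows "U (upow U e z n) t = t"
proof (induction n)
  case 0
  then show ?case using neutral_left t by simp
next
  case (Suc n)
  have "U (upow U e z (Suc n)) t = U z (U (upow U e z n) t)"
    using assoc z t upow_in_unit by simp
  then show ?case using Suc t by simp
qed

lemma fixed_points_closed:
  assumes "x \<in> {0..1}" "s \<in> {0..1}" "t \<in> {0..1}" "U x s = s"
  shows "U x (U s t) = U s t"
  using assms assoc by simp

lemma upow_decseq:
  assumes "z \<in> {0..1}" "z \<le> e"
  shows "decseq (upow U e z)"
proof (rule decseq_SucI)
  fix n
  show "upow U e z (Suc n) \<le> upow U e z n"
    using assms mono_left[of z e "upow U e z n"] neutral_left neutral_in_unit upow_in_unit by simp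
qed

lemma upow_incseq:
  assumes "z \<in> {0..1}" "e \<le> z"
  shows "incseq (upow U e z)"
proof (rule incseq_SucI)
  fix n
  show "upow U e z n \<le> upow U e z (Suc n)"
    using assms mono_left[of e z "upow U e z n"] neutral_left neutral_in_unit upow_in_unit by simp
qed

lemma partner_greater:
  assumes "x \<in> {0..1}" "y \<in> {0..1}" "U x y = e" "x < e"
  shows "e < y"
proof -
  have "e \<le> y" using assms mono_left[of x e y] neutral_left neutral_in_unit by simp
  moreover have "y \<noteq> e" using assms neutral_right by auto
  ultimately show ?thesis by simp
qed

end

locale uninorm_inverse_pair = unit_uninorm +
  fixes x y a d :: real
  assumes x_in_unit: "x \<in> {0..1}" and y_in_unit: "y \<in> {0..1}"
    and inverse: "U x y = e" and below_neutral: "x < e"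
    and lim_upow_x: "upow U e x \<longlonglongrightarrow> a" and lim_upow_y: "upow U e y \<longlonglongrightarrow> d"
begin

lemma neutral_less_y: "e < y"
  using partner_greater[OF x_in_unit y_in_unit inverse below_neutral] .

lemma lim_x_le_upow: "a \<le> upow U e x n"
  using decseq_ge[OF upow_decseq lim_upow_x] x_in_unit below_neutral by simp

lemma upow_y_le_lim: "upow U e y n \<le> d"
  using incseq_le[OF upow_incseq lim_upow_y] y_in_unit neutral_less_y by simp

lemma lim_x_bounds: "0 \<le> a" "a < e"
proof -
  show "0 \<le> a"
    by (rule LIMSEQ_le_const[OF lim_upow_x]) (use upow_in_unit x_in_unit in auto)
  show "a < e" using lim_x_le_upow[of 1] x_in_unit neutral_right below_neutral by simp
qed

lemma lim_y_bounds: "e < d" "d \<le> 1"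
proof -
  show "e < d"
    using upow_y_le_lim[of 1] y_in_unit neutral_right neutral_less_y by simp
  show "d \<le> 1"
    by (rule LIMSEQ_le_const2[OF lim_upow_y]) (use upow_in_unit y_in_unit in auto)
qed

lemma upow_x_lessE:
  assumes "a < s"
  obtains n where "upow U e x n < s"
  using order_tendstoD(2)[OF lim_upow_x assms] unfolding eventually_sequentially by blast

lemma upow_y_greaterE:
  assumes "s < d"
  obtains n where "s < upow U e y n"
  using order_tendstoD(1)[OF lim_upow_y assms] unfolding eventually_sequentially by blast

lemma fixed_by_upow_x: "t \<in> {0..1} \<Longrightarrow> U x t = t \<Longrightarrow> U (upow U e x n) t = t"
  using fixed_by_upow x_in_unit .

lemma fixed_by_upow_y: "t \<in> {0..1} \<Longrightarrow> U x t = t \<Longrightarrow> U (upow U e y n) t = t"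
  using fixed_by_upow fixed_by_inverse x_in_unit y_in_unit inverse by blast

lemma fixed_point_not_between:
  assumes t: "t \<in> {0..1}" "U x t = t"
  shows "t \<le> a \<or> d \<le> t"
proof (rule ccontr)
  assume "\<not> (t \<le> a \<or> d \<le> t)"
  then have between: "a < t" "t < d" by auto
  show False
  proof (cases "t \<le> e")
    case True
    obtain n where n: "upow U e x n < t" using upow_x_lessE between by blast
    have "t = U (upow U e x n) t" using fixed_by_upow_x t by simp
    also have "\<dots> \<le> U (upow U e x n) e"
      using mono_right True t neutral_in_unit upow_in_unit x_in_unit by blast
    also have "\<dots> = upow U e x n" using neutral_right upow_in_unit x_in_unit by blast
    finally show False using n by simp
  next
    case False
    obtain n where n: "t < upow U e y n" using upow_y_greaterE between by blast
    have "upow U e y n = U (upow U e y n) e" using neutral_right upow_in_unit y_in_unit by simp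
    also have "\<dots> \<le> U (upow U e y n) t"
      using mono_right False t neutral_in_unit upow_in_unit y_in_unit by simp
    also have "\<dots> = t" using fixed_by_upow_y t by simp
    finally show False using n by simp
  qed
qed

lemma acts_trivially_on_fixed_point:
  assumes s: "a < s" "s < d" and t: "t \<in> {0..1}" "U x t = t"
  shows "U s t = t"
proof -
  have s_in_unit: "s \<in> {0..1}" using s lim_x_bounds lim_y_bounds by auto
  obtain n where n: "upow U e x n < s" using upow_x_lessE s by blast
  obtain m where m: "s < upow U e y m" using upow_y_greaterE s by blast
  have "t = U (upow U e x n) t" using fixed_by_upow_x t by simp
  also have "\<dots> \<le> U s t" using mono_left n upow_in_unit x_in_unit s_in_unit t by simp
  finally have "t \<le> U s t" .
  moreover have "U s t \<le> U (upow U e y m) t"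
    using mono_left m upow_in_unit y_in_unit s_in_unit t by simp
  moreover have "U (upow U e y m) t = t" using fixed_by_upow_y t by simp
  ultimately show ?thesis by simp
qed

lemma lim_x_less_upow:
  assumes "U x a = a"
  shows "a < upow U e x n"
proof (rule ccontr)
  assume "\<not> a < upow U e x n"
  then have "upow U e x n = a" using lim_x_le_upow[of n] by simp
  moreover have "U (upow U e y n) a = a"
    using fixed_by_upow_y assms lim_x_bounds neutral_in_unit by simp
  moreover have "U (upow U e y n) (upow U e x n) = e"
    using upow_inverse[OF x_in_unit y_in_unit inverse, of n]
      commute[OF upow_in_unit[OF x_in_unit] upow_in_unit[OF y_in_unit]] by simp
  ultimately have "e = a" by simp
  then show False using lim_x_bounds by simp
qed

lemma upow_y_less_lim:
  assumes "U x d = d"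
  shows "upow U e y n < d"
proof (rule ccontr)
  assume "\<not> upow U e y n < d"
  then have "upow U e y n = d" using upow_y_le_lim[of n] by simp
  moreover have "U (upow U e x n) d = d" using fixed_by_upow_x assms lim_y_bounds neutral_in_unit by simp
  ultimately have "e = d" using upow_inverse[OF x_in_unit y_in_unit inverse, of n] by simp
  then show False using lim_y_bounds by simp
qed

lemma open_interval_closed:
  assumes fixed: "U x a = a" "U x d = d" and s: "a < s" "s < d" and t: "a < t" "t < d"
  shows "a < U s t \<and> U s t < d"
proof -
  have s_in_unit: "s \<in> {0..1}" and t_in_unit: "t \<in> {0..1}"
    using s t lim_x_bounds lim_y_bounds by auto
  obtain n k where n: "upow U e x n < s" and k: "upow U e x k < t"
    using upow_x_lessE s t by metis
  obtain m l where m: "s < upow U e y m" and l: "t < upow U e y l"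
    using upow_y_greaterE s t by metis
  have "a < upow U e x (n + k)" using lim_x_less_upow fixed by simp
  also have "\<dots> = U (upow U e x n) (upow U e x k)"
    using upow_add x_in_unit by simp
  also have "\<dots> \<le> U s (upow U e x k)"
    using mono_left n upow_in_unit x_in_unit s_in_unit by simp
  also have "\<dots> \<le> U s t" using mono_right k upow_in_unit x_in_unit s_in_unit t_in_unit by simp
  finally have lower: "a < U s t" .
  have "U s t \<le> U (upow U e y m) t"
    using mono_left m upow_in_unit y_in_unit s_in_unit t_in_unit by simp
  also have "\<dots> \<le> U (upow U e y m) (upow U e y l)"
    using mono_right l upow_in_unit y_in_unit t_in_unit by simp
  also have "\<dots> = upow U e y (m + l)" using upow_add y_in_unit by simp
  also have "\<dots> < d" using upow_y_less_lim fixed by simp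
  finally show ?thesis using lower by simp
qed

end

theorem mainTheorem11:
  fixes U :: "real \<Rightarrow> real \<Rightarrow> real" and e x a d :: real
  assumes "disjunctive_uninorm U e"
    and "0 < e" and "e < 1"
    and "x \<in> {0..1}" and "x < e"
    and "continuous_on {0..1} (U x)"
    and "U x ` {0..1} = {0..1}"
    and "upow U e x \<longlonglongrightarrow> a"
    and "upow_neg U e x \<longlonglongrightarrow> d"
    and "\<forall>t \<in> {0..a} \<union> {d..1}. U x t = t"
  shows "(\<forall>s\<in>{a<..<d}. \<forall>t\<in>{a<..<d}. U s t \<in> {a<..<d})
       \<and> (\<forall>s\<in>{0..a} \<union> {d..1}. \<forall>t\<in>{0..a} \<union> {d..1}. U s t \<in> {0..a} \<union> {d..1})
       \<and> (\<forall>s\<in>{a<..<d}. \<forall>t\<in>{0..a} \<union> {d..1}. U s t = t)"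
proof -
  interpret unit_uninorm U e using assms(1) by unfold_locales (simp add: disjunctive_uninorm_def)
  obtain y where y: "y \<in> {0..1}" "U x y = e"
    using assms(7) neutral_in_unit by (metis imageE)
  have "upow_neg U e x = upow U e y"
    using upartner_eqI[OF assms(4) y] by (simp add: upow_neg_def fun_eq_iff)
  then interpret uninorm_inverse_pair U e x y a d
    using assms(4,5,8,9) y by unfold_locales simp_all
  have outer_in_unit: "t \<in> {0..a} \<union> {d..1} \<Longrightarrow> t \<in> {0..1}" for t
    using lim_x_bounds lim_y_bounds neutral_in_unit by auto
  have outer_fixed: "t \<in> {0..1} \<Longrightarrow> U x t = t \<longleftrightarrow> t \<in> {0..a} \<union> {d..1}" for t
    using assms(10) fixed_point_not_between by auto
  show ?thesis
  proof (intro conjI ballI)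
    fix s t assume "s \<in> {a<..<d}" "t \<in> {a<..<d}"
    then show "U s t \<in> {a<..<d}"
      using open_interval_closed outer_fixed lim_x_bounds lim_y_bounds by simp
  next
    fix s t assume s: "s \<in> {0..a} \<union> {d..1}" and t: "t \<in> {0..a} \<union> {d..1}"
    then have "U x (U s t) = U s t"
      using fixed_points_closed x_in_unit outer_in_unit outer_fixed by blast
    then show "U s t \<in> {0..a} \<union> {d..1}"
      using outer_fixed closed s t outer_in_unit by blast
  next
    fix s t assume s: "s \<in> {a<..<d}" and t: "t \<in> {0..a} \<union> {d..1}"
    then have "U x t = t" using outer_in_unit outer_fixed by blast
    then show "U s t = t" using acts_trivially_on_fixed_point[of s t] s outer_in_unit[OF t] by simp
  qed
qed

end
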